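(* Let $\mathbf C$ be an admissible category of lattices, $X$ a convergence space, and $L$ a convergence $\mathbf C$-object. For every morphism $\varphi:L\to\mathbb P(X)$ in $\mathbf C^{\mathrm{conv}}$ there is a unique map $\varphi^\dagger:X\to\mathrm{pt}\,L$ such that $(\varphi^\dagger)^{-1}(\ell^\bullet)=\varphi(\ell)$ for every $\ell\in L$, and this map is continuous.
   Context: A filter on an inf-semilattice $L$ is a non-empty upward-closed subset closed under binary meets ($L$ itself allowed); $\mathbb F L$ is the set of filters. A category of lattices has lattices as objects and morphisms preserving finite suprema and infima; it is admissible if every powerset $\mathbb P(X)$ is an object and there are classes of index sets $\mathcal I,\mathcal J$ such that morphisms $L\to L'$ are exactly the monotone maps preserving all existing $I$-indexed infima ($I\in\mathcal I$) and $J$-indexed suprema ($J\in\mathcal J$). A convergence $\mathbf C$-object is $(L,\lim_L)$ with $L$ a $\mathbf C$-object and $\lim_L:\mathbb F L\to L$ monotone; morphisms $\varphi:L\to L'$ of $\mathbf C^{\mathrm{conv}}$ are $\mathbf C$-morphisms with $\lim_{L'}\mathcal F\le\varphi(\lim_L\varphi^{-1}(\mathcal F))$ for all $\mathcal F\in\mathbb F L'$. A convergence space is a set $X$ with a relation $\to$ between filters of subsets of $X$ and points with $\{S:x\in S\}\to x$ and $\mathcal F\to x,\mathcal F\subseteq\mathcal G\Rightarrow\mathcal G\to x$; $f:X\to Y$ is continuous if $\mathcal F\to x$ implies $f[\mathcal F]\to f(x)$, $f[\mathcal F]=\{B:f^{-1}(B)\in\mathcal F\}$. $\mathbb P(X)$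 is the powerset with $\lim\mathcal F=\{x:\mathcal F\to x\}$. With $\mathbb P(1)=\{\emptyset,\{*\}\}$ and $\lim_{\mathbb P(1)}$ constantly $\{*\}$, $\mathrm{pt}\,L$ is the set of $\mathbf C^{\mathrm{conv}}$-morphisms $L\to\mathbb P(1)$, $\ell^\bullet=\{\psi\in\mathrm{pt}\,L:\psi(\ell)=\{*\}\}$, and $\mathrm{pt}\,L$ is a convergence space with $\mathcal F\to\psi$ iff $\psi\in(\lim_L\{\ell:\ell^\bullet\in\mathcal F\})^\bullet$. *)

theory Defs
  imports Main "HOL-Library.FuncSet"
begin

section \<open>Posets given as a carrier set inside an ordered type\<close>

definition is_inf :: "'a::order set \<Rightarrow> 'a set \<Rightarrow> 'a \<Rightarrow> bool" where
  "is_inf A S m \<longleftrightarrow> m \<in> A \<and> (\<forall>s\<in>S. m \<le> s) \<and> (\<forall>y\<in>A. (\<forall>s\<in>S. y \<le> s) \<longrightarrow> y \<le> m)"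

definition is_sup :: "'a::order set \<Rightarrow> 'a set \<Rightarrow> 'a \<Rightarrow> bool" where
  "is_sup A S m \<longleftrightarrow> m \<in> A \<and> (\<forall>s\<in>S. s \<le> m) \<and> (\<forall>y\<in>A. (\<forall>s\<in>S. s \<le> y) \<longrightarrow> m \<le> y)"

definition fin_lattice :: "'a::order set \<Rightarrow> bool" where
  "fin_lattice A \<longleftrightarrow> (\<forall>S\<subseteq>A. finite S \<longrightarrow> (\<exists>m. is_inf A S m) \<and> (\<exists>m. is_sup A S m))"

text \<open>Filters of an inf-semilattice (the whole carrier allowed).\<close>
definition filters :: "'a::order set \<Rightarrow> 'a set set" where
  "filters A = {F. F \<subseteq> A \<and> F \<noteq> {}
      \<and> (\<forall>x\<in>F. \<forall>y\<in>A. x \<le> y \<longrightarrow> y \<in> F)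
      \<and> (\<forall>x\<in>F. \<forall>y\<in>F. \<forall>m. is_inf A {x, y} m \<longrightarrow> m \<in> F)}"

section \<open>Morphisms of the admissible category C given by index classes I, J\<close>

definition C_hom :: "'i set set \<Rightarrow> 'i set set \<Rightarrow> 'a::order set \<Rightarrow> 'b::order set \<Rightarrow> ('a \<Rightarrow> 'b) \<Rightarrow> bool" where
  "C_hom II JJ A B \<phi> \<longleftrightarrow>
     \<phi> \<in> A \<rightarrow>\<^sub>E B
   \<and> (\<forall>x\<in>A. \<forall>y\<in>A. x \<le> y \<longrightarrow> \<phi> x \<le> \<phi> y)
   \<and> (\<forall>S\<subseteq>A. finite S \<longrightarrow> (\<forall>m. is_inf A S m \<longrightarrow> is_inf B (\<phi> ` S) (\<phi> m))
                          \<and> (\<forall>m. is_sup A S m \<longrightarrow> is_sup B (\<phi> ` S) (\<phi> m)))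
   \<and> (\<forall>I\<in>II. \<forall>f. (\<forall>i\<in>I. f i \<in> A) \<longrightarrow>
          (\<forall>m. is_inf A (f ` I) m \<longrightarrow> is_inf B (\<phi> ` f ` I) (\<phi> m)))
   \<and> (\<forall>J\<in>JJ. \<forall>f. (\<forall>j\<in>J. f j \<in> A) \<longrightarrow>
          (\<forall>m. is_sup A (f ` J) m \<longrightarrow> is_sup B (\<phi> ` f ` J) (\<phi> m)))"

definition conv_obj :: "'a::order set \<Rightarrow> ('a set \<Rightarrow> 'a) \<Rightarrow> bool" where
  "conv_obj A lim \<longleftrightarrow> fin_lattice A
     \<and> (\<forall>F\<in>filters A. lim F \<in> A)
     \<and> (\<forall>F\<in>filters A. \<forall>G\<in>filters A. F \<subseteq> G \<longrightarrow> lim F \<le> lim G)"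

definition conv_hom :: "'i set set \<Rightarrow> 'i set set \<Rightarrow> 'a::order set \<Rightarrow> ('a set \<Rightarrow> 'a)
     \<Rightarrow> 'b::order set \<Rightarrow> ('b set \<Rightarrow> 'b) \<Rightarrow> ('a \<Rightarrow> 'b) \<Rightarrow> bool" where
  "conv_hom II JJ A limA B limB \<phi> \<longleftrightarrow> C_hom II JJ A B \<phi>
     \<and> (\<forall>F\<in>filters B. limB F \<le> \<phi> (limA {l\<in>A. \<phi> l \<in> F}))"

definition conv_space :: "'x set \<Rightarrow> ('x set set \<Rightarrow> 'x \<Rightarrow> bool) \<Rightarrow> bool" where
  "conv_space X cv \<longleftrightarrow>
     (\<forall>F x. cv F x \<longrightarrow> F \<in> filters (Pow X) \<and> x \<in> X)
   \<and> (\<forall>x\<in>X. cv {S\<in>Pow X. x \<in> S} x)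
   \<and> (\<forall>F G x. cv F x \<longrightarrow> G \<in> filters (Pow X) \<longrightarrow> F \<subseteq> G \<longrightarrow> cv G x)"

definition fimage :: "'x set \<Rightarrow> 'y set \<Rightarrow> ('x \<Rightarrow> 'y) \<Rightarrow> 'x set set \<Rightarrow> 'y set set" where
  "fimage X Y f F = {B\<in>Pow Y. {x\<in>X. f x \<in> B} \<in> F}"

definition continuous_conv :: "'x set \<Rightarrow> ('x set set \<Rightarrow> 'x \<Rightarrow> bool) \<Rightarrow> 'y set
     \<Rightarrow> ('y set set \<Rightarrow> 'y \<Rightarrow> bool) \<Rightarrow> ('x \<Rightarrow> 'y) \<Rightarrow> bool" where
  "continuous_conv X cX Y cY f \<longleftrightarrow> (\<forall>x\<in>X. f x \<in> Y)
     \<and> (\<forall>F x. cX F x \<longrightarrow> cY (fimage X Y f F) (f x))"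

definition limP :: "'x set \<Rightarrow> ('x set set \<Rightarrow> 'x \<Rightarrow> bool) \<Rightarrow> 'x set set \<Rightarrow> 'x set" where
  "limP X cv F = {x\<in>X. cv F x}"

text \<open>P(1) is the powerset of unit, i.e. UNIV :: unit set set, with constant limit {*}.\<close>
definition pt :: "'i set set \<Rightarrow> 'i set set \<Rightarrow> 'a::order set \<Rightarrow> ('a set \<Rightarrow> 'a) \<Rightarrow> ('a \<Rightarrow> unit set) set" where
  "pt II JJ A lim = {\<psi>. conv_hom II JJ A lim (Pow (UNIV::unit set)) (\<lambda>_. UNIV) \<psi>}"

definition bullet :: "'i set set \<Rightarrow> 'i set set \<Rightarrow> 'a::order set \<Rightarrow> ('a set \<Rightarrow> 'a) \<Rightarrow> 'a \<Rightarrow> ('a \<Rightarrow> unit set) set" where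
  "bullet II JJ A lim l = {\<psi>\<in>pt II JJ A lim. \<psi> l = UNIV}"

definition pt_conv :: "'i set set \<Rightarrow> 'i set set \<Rightarrow> 'a::order set \<Rightarrow> ('a set \<Rightarrow> 'a)
     \<Rightarrow> ('a \<Rightarrow> unit set) set set \<Rightarrow> ('a \<Rightarrow> unit set) \<Rightarrow> bool" where
  "pt_conv II JJ A lim F \<psi> \<longleftrightarrow> F \<in> filters (Pow (pt II JJ A lim)) \<and> \<psi> \<in> pt II JJ A lim
     \<and> \<psi> \<in> bullet II JJ A lim (lim {l\<in>A. bullet II JJ A lim l \<in> F})"

end

(*
  The transpose sends a point x of X to dagger(x) = e_x o phi, where e_x = point_eval x
  maps P(X) to P(1) by recording whether x lies in a set.  Since e_x preserves all infima
  and suprema, dagger(x) is a C-morphism.  It respects limits because every filter F on P(1)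
  pulls back along e_x to a filter on X finer than the principal filter of x; that filter
  converges to x, and the limit condition of phi at it puts x into
  phi(lim {l. e_x(phi l) : F}).  Uniqueness holds because P(1) has only two elements.
  For continuity, the image filter G = g[F] of a filter F -> x satisfies
  {l. l^bullet : G} = {l. phi l : F}, so the limit condition of phi at F is exactly the
  convergence G -> g(x) in pt L.
*)

theory Submission
  imports Defs
begin

lemma is_inf_in: "is_inf A S m \<Longrightarrow> m \<in> A"
  unfolding is_inf_def by blast

lemma is_sup_in: "is_sup A S m \<Longrightarrow> m \<in> A"
  unfolding is_sup_def by blast

lemma is_inf_Pow: "is_inf (Pow X) S m \<longleftrightarrow> m = X \<inter> \<Inter>S"
proof
  assume m: "is_inf (Pow X) S m"
  have "X \<inter> \<Inter>S \<in> Pow X" "\<forall>s\<in>S. X \<inter> \<Inter>S \<le> s" by auto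
  with m have "X \<inter> \<Inter>S \<subseteq> m" unfolding is_inf_def by blast
  moreover have "m \<subseteq> X \<inter> \<Inter>S" using m unfolding is_inf_def by blast
  ultimately show "m = X \<inter> \<Inter>S" by blast
qed (auto simp: is_inf_def)

lemma is_sup_Pow: "is_sup (Pow X) S m \<longleftrightarrow> S \<subseteq> Pow X \<and> m = \<Union>S"
proof
  assume m: "is_sup (Pow X) S m"
  then have "S \<subseteq> Pow X" unfolding is_sup_def by blast
  then have "\<Union>S \<in> Pow X" "\<forall>s\<in>S. s \<le> \<Union>S" by auto
  with m have "m \<subseteq> \<Union>S" unfolding is_sup_def by blast
  moreover have "\<Union>S \<subseteq> m" using m unfolding is_sup_def by blast
  ultimately show "S \<subseteq> Pow X \<and> m = \<Union>S" using \<open>S \<subseteq> Pow X\<close> by blast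
qed (auto simp: is_sup_def)

lemma filters_subset: "F \<in> filters A \<Longrightarrow> F \<subseteq> A"
  unfolding filters_def mem_Collect_eq by (elim conjE)

lemma filters_nonempty: "F \<in> filters A \<Longrightarrow> F \<noteq> {}"
  unfolding filters_def mem_Collect_eq by (elim conjE)

lemma filters_up: "F \<in> filters A \<Longrightarrow> x \<in> F \<Longrightarrow> y \<in> A \<Longrightarrow> x \<le> y \<Longrightarrow> y \<in> F"
  unfolding filters_def mem_Collect_eq by (elim conjE) blast

lemma filters_inf: "F \<in> filters A \<Longrightarrow> x \<in> F \<Longrightarrow> y \<in> F \<Longrightarrow> is_inf A {x, y} m \<Longrightarrow> m \<in> F"
  unfolding filters_def mem_Collect_eq by (elim conjE) metis

lemma filtersI:
  assumes "F \<subseteq> A" "F \<noteq> {}"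
    and "\<And>x y. x \<in> F \<Longrightarrow> y \<in> A \<Longrightarrow> x \<le> y \<Longrightarrow> y \<in> F"
    and "\<And>x y m. x \<in> F \<Longrightarrow> y \<in> F \<Longrightarrow> is_inf A {x, y} m \<Longrightarrow> m \<in> F"
  shows "F \<in> filters A"
  unfolding filters_def mem_Collect_eq using assms by blast

lemma filters_top:
  assumes F: "F \<in> filters A" and t: "is_inf A {} t"
  shows "t \<in> F"
proof -
  obtain s where s: "s \<in> F" using filters_nonempty[OF F] by blast
  with F have "s \<in> A" using filters_subset by blast
  with t have "s \<le> t" unfolding is_inf_def by blast
  with F s show ?thesis using filters_up is_inf_in[OF t] by blast
qed

lemma conv_obj_top: "conv_obj A lim \<Longrightarrow> \<exists>t. is_inf A {} t"
  unfolding conv_obj_def fin_lattice_def by (meson empty_subsetI finite.emptyI)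

lemma conv_obj_lim: "conv_obj A lim \<Longrightarrow> F \<in> filters A \<Longrightarrow> lim F \<in> A"
  unfolding conv_obj_def by blast

lemma conv_space_filter: "conv_space X cv \<Longrightarrow> cv F x \<Longrightarrow> F \<in> filters (Pow X)"
  unfolding conv_space_def by (elim conjE) metis

lemma conv_space_point: "conv_space X cv \<Longrightarrow> cv F x \<Longrightarrow> x \<in> X"
  unfolding conv_space_def by (elim conjE) metis

lemma conv_space_principal: "conv_space X cv \<Longrightarrow> x \<in> X \<Longrightarrow> cv {S \<in> Pow X. x \<in> S} x"
  unfolding conv_space_def by (elim conjE) metis

lemma conv_space_finer:
  "conv_space X cv \<Longrightarrow> cv F x \<Longrightarrow> G \<in> filters (Pow X) \<Longrightarrow> F \<subseteq> G \<Longrightarrow> cv G x"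
  unfolding conv_space_def by (elim conjE) metis

lemma C_homI:
  assumes "\<phi> \<in> A \<rightarrow>\<^sub>E B"
    and "\<And>x y. x \<in> A \<Longrightarrow> y \<in> A \<Longrightarrow> x \<le> y \<Longrightarrow> \<phi> x \<le> \<phi> y"
    and "\<And>S m. S \<subseteq> A \<Longrightarrow> finite S \<Longrightarrow> is_inf A S m \<Longrightarrow> is_inf B (\<phi> ` S) (\<phi> m)"
    and "\<And>S m. S \<subseteq> A \<Longrightarrow> finite S \<Longrightarrow> is_sup A S m \<Longrightarrow> is_sup B (\<phi> ` S) (\<phi> m)"
    and "\<And>I f m. I \<in> II \<Longrightarrow> \<forall>i\<in>I. f i \<in> A \<Longrightarrow> is_inf A (f ` I) m
           \<Longrightarrow> is_inf B (\<phi> ` f ` I) (\<phi> m)"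
    and "\<And>J f m. J \<in> JJ \<Longrightarrow> \<forall>j\<in>J. f j \<in> A \<Longrightarrow> is_sup A (f ` J) m
           \<Longrightarrow> is_sup B (\<phi> ` f ` J) (\<phi> m)"
  shows "C_hom II JJ A B \<phi>"
  unfolding C_hom_def by (intro conjI ballI allI impI; rule assms; assumption)

lemma C_hom_funcset: "C_hom II JJ A B \<phi> \<Longrightarrow> \<phi> \<in> A \<rightarrow>\<^sub>E B"
  unfolding C_hom_def by (elim conjE)

lemma C_hom_mono:
  assumes "C_hom II JJ A B \<phi>" and "x \<in> A" "y \<in> A" "x \<le> y"
  shows "\<phi> x \<le> \<phi> y"
proof -
  have "\<forall>x\<in>A. \<forall>y\<in>A. x \<le> y \<longrightarrow> \<phi> x \<le> \<phi> y"
    using assms(1) unfolding C_hom_def by (elim conjE)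
  with assms(2-4) show ?thesis by blast
qed

lemma C_hom_finite_inf:
  assumes "C_hom II JJ A B \<phi>" and "S \<subseteq> A" "finite S" "is_inf A S m"
  shows "is_inf B (\<phi> ` S) (\<phi> m)"
proof -
  have "\<forall>S\<subseteq>A. finite S \<longrightarrow> (\<forall>m. is_inf A S m \<longrightarrow> is_inf B (\<phi> ` S) (\<phi> m))
                      \<and> (\<forall>m. is_sup A S m \<longrightarrow> is_sup B (\<phi> ` S) (\<phi> m))"
    using assms(1) unfolding C_hom_def by (elim conjE)
  with assms(2-4) show ?thesis by blast
qed

lemma C_hom_finite_sup:
  assumes "C_hom II JJ A B \<phi>" and "S \<subseteq> A" "finite S" "is_sup A S m"
  shows "is_sup B (\<phi> ` S) (\<phi> m)"
proof -
  have "\<forall>S\<subseteq>A. finite S \<longrightarrow> (\<forall>m. is_inf A S m \<longrightarrow> is_inf B (\<phi> ` S) (\<phi> m))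
                      \<and> (\<forall>m. is_sup A S m \<longrightarrow> is_sup B (\<phi> ` S) (\<phi> m))"
    using assms(1) unfolding C_hom_def by (elim conjE)
  with assms(2-4) show ?thesis by blast
qed

lemma C_hom_indexed_inf:
  assumes "C_hom II JJ A B \<phi>" and "I \<in> II" "\<forall>i\<in>I. f i \<in> A" "is_inf A (f ` I) m"
  shows "is_inf B (\<phi> ` f ` I) (\<phi> m)"
proof -
  have "\<forall>I\<in>II. \<forall>f. (\<forall>i\<in>I. f i \<in> A) \<longrightarrow>
          (\<forall>m. is_inf A (f ` I) m \<longrightarrow> is_inf B (\<phi> ` f ` I) (\<phi> m))"
    using assms(1) unfolding C_hom_def by (elim conjE)
  with assms(2-4) show ?thesis by blast
qed

lemma C_hom_indexed_sup:
  assumes "C_hom II JJ A B \<phi>" and "J \<in> JJ" "\<forall>j\<in>J. f j \<in> A" "is_sup A (f ` J) m"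
  shows "is_sup B (\<phi> ` f ` J) (\<phi> m)"
proof -
  have "\<forall>J\<in>JJ. \<forall>f. (\<forall>j\<in>J. f j \<in> A) \<longrightarrow>
          (\<forall>m. is_sup A (f ` J) m \<longrightarrow> is_sup B (\<phi> ` f ` J) (\<phi> m))"
    using assms(1) unfolding C_hom_def by (elim conjE)
  with assms(2-4) show ?thesis by blast
qed

lemma conv_hom_C_hom: "conv_hom II JJ A limA B limB \<phi> \<Longrightarrow> C_hom II JJ A B \<phi>"
  unfolding conv_hom_def by blast

lemma conv_hom_lim:
  "conv_hom II JJ A limA B limB \<phi> \<Longrightarrow> F \<in> filters B \<Longrightarrow> limB F \<le> \<phi> (limA {l \<in> A. \<phi> l \<in> F})"
  unfolding conv_hom_def by blast

lemma C_hom_comp: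
  assumes \<phi>: "C_hom II JJ A B \<phi>" and \<epsilon>: "C_hom II JJ B C \<epsilon>"
  shows "C_hom II JJ A C (\<lambda>l\<in>A. \<epsilon> (\<phi> l))"
proof -
  have \<phi>B: "\<phi> ` S \<subseteq> B" if "S \<subseteq> A" for S using C_hom_funcset[OF \<phi>] that by blast
  have img: "(\<lambda>l\<in>A. \<epsilon> (\<phi> l)) ` S = \<epsilon> ` \<phi> ` S" if "S \<subseteq> A" for S
    using that by (auto simp: image_iff subset_iff)
  show ?thesis
  proof (rule C_homI)
    show "(\<lambda>l\<in>A. \<epsilon> (\<phi> l)) \<in> A \<rightarrow>\<^sub>E C" using C_hom_funcset[OF \<epsilon>] \<phi>B by auto
    show "(\<lambda>l\<in>A. \<epsilon> (\<phi> l)) x \<le> (\<lambda>l\<in>A. \<epsilon> (\<phi> l)) y" if "x \<in> A" "y \<in> A" "x \<le> y" for x y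
      using that \<phi>B[of "{x, y}"] C_hom_mono[OF \<phi>] C_hom_mono[OF \<epsilon>] by simp
    show "is_inf C ((\<lambda>l\<in>A. \<epsilon> (\<phi> l)) ` S) ((\<lambda>l\<in>A. \<epsilon> (\<phi> l)) m)"
      if "S \<subseteq> A" "finite S" "is_inf A S m" for S m
      unfolding img[OF that(1)] restrict_apply'[OF is_inf_in[OF that(3)]]
      using C_hom_finite_inf[OF \<epsilon> \<phi>B[OF that(1)] _ C_hom_finite_inf[OF \<phi> that]] that(2) by blast
    show "is_sup C ((\<lambda>l\<in>A. \<epsilon> (\<phi> l)) ` S) ((\<lambda>l\<in>A. \<epsilon> (\<phi> l)) m)"
      if "S \<subseteq> A" "finite S" "is_sup A S m" for S m
      unfolding img[OF that(1)] restrict_apply'[OF is_sup_in[OF that(3)]]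
      using C_hom_finite_sup[OF \<epsilon> \<phi>B[OF that(1)] _ C_hom_finite_sup[OF \<phi> that]] that(2) by blast
    show "is_inf C ((\<lambda>l\<in>A. \<epsilon> (\<phi> l)) ` f ` I) ((\<lambda>l\<in>A. \<epsilon> (\<phi> l)) m)"
      if "I \<in> II" "\<forall>i\<in>I. f i \<in> A" "is_inf A (f ` I) m" for I f m
    proof -
      have fI: "f ` I \<subseteq> A" using that(2) by blast
      have "is_inf B ((\<phi> \<circ> f) ` I) (\<phi> m)"
        using C_hom_indexed_inf[OF \<phi> that] by (simp only: image_comp)
      moreover have "\<forall>i\<in>I. (\<phi> \<circ> f) i \<in> B" using \<phi>B[OF fI] by auto
      ultimately have "is_inf C (\<epsilon> ` (\<phi> \<circ> f) ` I) (\<epsilon> (\<phi> m))"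
        using C_hom_indexed_inf[OF \<epsilon> that(1)] by blast
      then show ?thesis
        unfolding img[OF fI] restrict_apply'[OF is_inf_in[OF that(3)]] by (simp only: image_comp)
    qed
    show "is_sup C ((\<lambda>l\<in>A. \<epsilon> (\<phi> l)) ` f ` J) ((\<lambda>l\<in>A. \<epsilon> (\<phi> l)) m)"
      if "J \<in> JJ" "\<forall>j\<in>J. f j \<in> A" "is_sup A (f ` J) m" for J f m
    proof -
      have fJ: "f ` J \<subseteq> A" using that(2) by blast
      have "is_sup B ((\<phi> \<circ> f) ` J) (\<phi> m)"
        using C_hom_indexed_sup[OF \<phi> that] by (simp only: image_comp)
      moreover have "\<forall>i\<in>J. (\<phi> \<circ> f) i \<in> B" using \<phi>B[OF fJ] by auto
      ultimately have "is_sup C (\<epsilon> ` (\<phi> \<circ> f) ` J) (\<epsilon> (\<phi> m))"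
        using C_hom_indexed_sup[OF \<epsilon> that(1)] by blast
      then show ?thesis
        unfolding img[OF fJ] restrict_apply'[OF is_sup_in[OF that(3)]] by (simp only: image_comp)
    qed
  qed
qed

definition complete_hom :: "'a::order set \<Rightarrow> 'b::order set \<Rightarrow> ('a \<Rightarrow> 'b) \<Rightarrow> bool" where
  "complete_hom A B h \<longleftrightarrow> h ` A \<subseteq> B
     \<and> (\<forall>S m. S \<subseteq> A \<longrightarrow> is_inf A S m \<longrightarrow> is_inf B (h ` S) (h m))
     \<and> (\<forall>S m. S \<subseteq> A \<longrightarrow> is_sup A S m \<longrightarrow> is_sup B (h ` S) (h m))"

lemma complete_hom_C_hom:
  assumes h: "complete_hom A B h"
  shows "C_hom II JJ A B (restrict h A)"
proof -
  have inf: "is_inf B (h ` S) (h m)" if "S \<subseteq> A" "is_inf A S m" for S m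
    using h that unfolding complete_hom_def by blast
  have sup: "is_sup B (h ` S) (h m)" if "S \<subseteq> A" "is_sup A S m" for S m
    using h that unfolding complete_hom_def by blast
  have img: "restrict h A ` S = h ` S" if "S \<subseteq> A" for S
    using that by auto
  show ?thesis
  proof (rule C_homI)
    show "restrict h A \<in> A \<rightarrow>\<^sub>E B" using h unfolding complete_hom_def by auto
    show "restrict h A x \<le> restrict h A y" if "x \<in> A" "y \<in> A" "x \<le> y" for x y
    proof -
      have "is_inf A {x, y} x" using that unfolding is_inf_def by auto
      then have "is_inf B {h x, h y} (h x)" using inf[of "{x, y}"] that by simp
      then show ?thesis using that unfolding is_inf_def by simp
    qed
    show "is_inf B (restrict h A ` S) (restrict h A m)" if "S \<subseteq> A" "is_inf A S m" for S m
      unfolding img[OF that(1)] restrict_apply'[OF is_inf_in[OF that(2)]] using inf[OF that] .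
    show "is_sup B (restrict h A ` S) (restrict h A m)" if "S \<subseteq> A" "is_sup A S m" for S m
      unfolding img[OF that(1)] restrict_apply'[OF is_sup_in[OF that(2)]] using sup[OF that] .
    show "is_inf B (restrict h A ` f ` I) (restrict h A m)"
      if "\<forall>i\<in>I. f i \<in> A" "is_inf A (f ` I) m" for I f m
    proof -
      have fI: "f ` I \<subseteq> A" using that(1) by blast
      show ?thesis
        unfolding img[OF fI] restrict_apply'[OF is_inf_in[OF that(2)]] using inf[OF fI that(2)] .
    qed
    show "is_sup B (restrict h A ` f ` J) (restrict h A m)"
      if "\<forall>j\<in>J. f j \<in> A" "is_sup A (f ` J) m" for J f m
    proof -
      have fJ: "f ` J \<subseteq> A" using that(1) by blast
      show ?thesis
        unfolding img[OF fJ] restrict_apply'[OF is_sup_in[OF that(2)]] using sup[OF fJ that(2)] .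
    qed
  qed
qed

lemma C_hom_preimage_filter:
  assumes \<phi>: "C_hom II JJ A B \<phi>" and t: "is_inf A {} t" and F: "F \<in> filters B"
  shows "{a \<in> A. \<phi> a \<in> F} \<in> filters A"
proof (rule filtersI)
  have "is_inf B {} (\<phi> t)" using C_hom_finite_inf[OF \<phi> _ _ t] by simp
  then have "\<phi> t \<in> F" using filters_top[OF F] by blast
  then show "{a \<in> A. \<phi> a \<in> F} \<noteq> {}" using is_inf_in[OF t] by blast
  show "{a \<in> A. \<phi> a \<in> F} \<subseteq> A" by blast
next
  fix a b assume "a \<in> {a \<in> A. \<phi> a \<in> F}" "b \<in> A" "a \<le> b"
  moreover have "\<phi> b \<in> B" using C_hom_funcset[OF \<phi>] \<open>b \<in> A\<close> by blast
  ultimately show "b \<in> {a \<in> A. \<phi> a \<in> F}"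
    using filters_up[OF F] C_hom_mono[OF \<phi>] by blast
next
  fix a b m assume ab: "a \<in> {a \<in> A. \<phi> a \<in> F}" "b \<in> {a \<in> A. \<phi> a \<in> F}" and m: "is_inf A {a, b} m"
  then have "is_inf B {\<phi> a, \<phi> b} (\<phi> m)" using C_hom_finite_inf[OF \<phi>, of "{a, b}"] by simp
  then show "m \<in> {a \<in> A. \<phi> a \<in> F}"
    using filters_inf[OF F] ab is_inf_in[OF m] by blast
qed

lemma complete_hom_preimage_filter:
  assumes "complete_hom A B h" "is_inf A {} t" "F \<in> filters B"
  shows "{a \<in> A. h a \<in> F} \<in> filters A"
proof -
  have "{a \<in> A. restrict h A a \<in> F} = {a \<in> A. h a \<in> F}" by auto
  then show ?thesis
    using C_hom_preimage_filter[OF complete_hom_C_hom[OF assms(1), of "{}" "{}"] assms(2,3)] by simp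
qed

lemma conv_obj_preimage_filter:
  assumes "conv_obj A lim" "C_hom II JJ A B \<phi>" "F \<in> filters B"
  shows "{l \<in> A. \<phi> l \<in> F} \<in> filters A"
  using conv_obj_top[OF assms(1)] C_hom_preimage_filter[OF assms(2) _ assms(3)] by blast

lemma complete_hom_preimage:
  assumes "f ` X \<subseteq> Y"
  shows "complete_hom (Pow Y) (Pow X) (\<lambda>B. {x \<in> X. f x \<in> B})"
  unfolding complete_hom_def is_inf_Pow is_sup_Pow using assms by auto

lemma fimage_filter:
  assumes "f ` X \<subseteq> Y" and "F \<in> filters (Pow X)"
  shows "fimage X Y f F \<in> filters (Pow Y)"
  using complete_hom_preimage_filter[OF complete_hom_preimage[OF assms(1)] _ assms(2)]
  unfolding fimage_def is_inf_Pow by simp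

definition point_eval :: "'x \<Rightarrow> 'x set \<Rightarrow> unit set" where
  "point_eval x S = (if x \<in> S then UNIV else {})"

lemma complete_hom_point_eval:
  assumes "x \<in> X"
  shows "complete_hom (Pow X) (Pow UNIV) (point_eval x)"
  unfolding complete_hom_def is_inf_Pow is_sup_Pow point_eval_def using assms by auto

lemma point_eval_pullback_converges:
  assumes cv: "conv_space X cv" and x: "x \<in> X" and F: "F \<in> filters (Pow (UNIV :: unit set))"
  shows "cv {S \<in> Pow X. point_eval x S \<in> F} x"
proof -
  have "UNIV \<in> F" using filters_top[OF F] unfolding is_inf_Pow by simp
  then have "{S \<in> Pow X. x \<in> S} \<subseteq> {S \<in> Pow X. point_eval x S \<in> F}"
    by (auto simp: point_eval_def)
  moreover have "{S \<in> Pow X. point_eval x S \<in> F} \<in> filters (Pow X)"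
    using complete_hom_preimage_filter[OF complete_hom_point_eval[OF x] _ F] by (simp add: is_inf_Pow)
  ultimately show ?thesis
    using conv_space_finer[OF cv conv_space_principal[OF cv x]] by blast
qed

definition dagger :: "'x set \<Rightarrow> 'a set \<Rightarrow> ('a \<Rightarrow> 'x set) \<Rightarrow> 'x \<Rightarrow> 'a \<Rightarrow> unit set" where
  "dagger X A \<phi> = (\<lambda>x\<in>X. \<lambda>l\<in>A. point_eval x (\<phi> l))"

lemma dagger_funcset:
  assumes cv: "conv_space X cv" and A: "conv_obj A lim"
    and \<phi>: "conv_hom II JJ A lim (Pow X) (limP X cv) \<phi>"
  shows "dagger X A \<phi> \<in> X \<rightarrow>\<^sub>E pt II JJ A lim"
proof -
  have \<phi>C: "C_hom II JJ A (Pow X) \<phi>" using conv_hom_C_hom[OF \<phi>] .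
  have \<phi>X: "\<phi> l \<in> Pow X" if "l \<in> A" for l using C_hom_funcset[OF \<phi>C] that by blast
  have "(\<lambda>l\<in>A. point_eval x (\<phi> l)) \<in> pt II JJ A lim" if x: "x \<in> X" for x
  proof -
    let ?\<psi> = "\<lambda>l\<in>A. point_eval x (\<phi> l)"
    have "C_hom II JJ A (Pow UNIV) (\<lambda>l\<in>A. restrict (point_eval x) (Pow X) (\<phi> l))"
      by (rule C_hom_comp[OF \<phi>C complete_hom_C_hom[OF complete_hom_point_eval[OF x]]])
    moreover have "(\<lambda>l\<in>A. restrict (point_eval x) (Pow X) (\<phi> l)) = ?\<psi>"
      using \<phi>X by (intro restrict_ext) simp
    ultimately have \<psi>C: "C_hom II JJ A (Pow UNIV) ?\<psi>" by simp
    have "UNIV \<le> ?\<psi> (lim {l \<in> A. ?\<psi> l \<in> F})" if F: "F \<in> filters (Pow UNIV)" for F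
    proof -
      define G where "G = {S \<in> Pow X. point_eval x S \<in> F}"
      have Gx: "cv G x" unfolding G_def using point_eval_pullback_converges[OF cv x F] .
      have eq: "{l \<in> A. \<phi> l \<in> G} = {l \<in> A. ?\<psi> l \<in> F}" using \<phi>X by (auto simp: G_def)
      have "x \<in> limP X cv G" using Gx x by (simp add: limP_def)
      also have "\<dots> \<subseteq> \<phi> (lim {l \<in> A. \<phi> l \<in> G})"
        using conv_hom_lim[OF \<phi> conv_space_filter[OF cv Gx]] by simp
      finally have "x \<in> \<phi> (lim {l \<in> A. ?\<psi> l \<in> F})" unfolding eq .
      moreover have "lim {l \<in> A. ?\<psi> l \<in> F} \<in> A"
        using conv_obj_lim[OF A conv_obj_preimage_filter[OF A \<psi>C F]] .
      ultimately show ?thesis by (simp add: point_eval_def)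
    qed
    with \<psi>C show ?thesis by (simp add: pt_def conv_hom_def)
  qed
  then show ?thesis by (simp add: dagger_def)
qed

lemma dagger_preimage_bullet:
  assumes cv: "conv_space X cv" and A: "conv_obj A lim"
    and \<phi>: "conv_hom II JJ A lim (Pow X) (limP X cv) \<phi>" and l: "l \<in> A"
  shows "{x \<in> X. dagger X A \<phi> x \<in> bullet II JJ A lim l} = \<phi> l"
proof -
  have "\<phi> l \<subseteq> X" using C_hom_funcset[OF conv_hom_C_hom[OF \<phi>]] l by blast
  moreover have "dagger X A \<phi> x \<in> bullet II JJ A lim l \<longleftrightarrow> x \<in> \<phi> l" if "x \<in> X" for x
    using dagger_funcset[OF cv A \<phi>] that l by (auto simp: bullet_def dagger_def point_eval_def)
  ultimately show ?thesis by blast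
qed

lemma pt_funcset: "\<psi> \<in> pt II JJ A lim \<Longrightarrow> \<psi> \<in> A \<rightarrow>\<^sub>E Pow UNIV"
  unfolding pt_def using conv_hom_C_hom C_hom_funcset by blast

lemma eq_dagger_if_preimage_bullet:
  assumes g: "g \<in> X \<rightarrow>\<^sub>E pt II JJ A lim"
    and g\<phi>: "\<forall>l\<in>A. {x \<in> X. g x \<in> bullet II JJ A lim l} = \<phi> l"
  shows "g = dagger X A \<phi>"
proof (rule extensionalityI)
  show "g \<in> extensional X" using g by (simp add: PiE_iff)
  show "dagger X A \<phi> \<in> extensional X" by (simp add: dagger_def)
  fix x assume x: "x \<in> X"
  then have gx: "g x \<in> pt II JJ A lim" using g by blast
  show "g x = dagger X A \<phi> x"
  proof (rule extensionalityI)
    show "g x \<in> extensional A" using pt_funcset[OF gx] by (simp add: PiE_iff)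
    show "dagger X A \<phi> x \<in> extensional A" using x by (simp add: dagger_def)
    fix l assume l: "l \<in> A"
    have "g x l = UNIV \<longleftrightarrow> x \<in> \<phi> l" using g\<phi> l x gx unfolding bullet_def by blast
    moreover have "g x l = {} \<or> g x l = UNIV" by auto
    ultimately show "g x l = dagger X A \<phi> x l" using x l by (auto simp: dagger_def point_eval_def)
  qed
qed

lemma continuous_conv_if_preimage_bullet:
  assumes cv: "conv_space X cv" and A: "conv_obj A lim"
    and \<phi>: "conv_hom II JJ A lim (Pow X) (limP X cv) \<phi>"
    and g: "g \<in> X \<rightarrow>\<^sub>E pt II JJ A lim"
    and g\<phi>: "\<forall>l\<in>A. {x \<in> X. g x \<in> bullet II JJ A lim l} = \<phi> l"
  shows "continuous_conv X cv (pt II JJ A lim) (pt_conv II JJ A lim) g"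
  unfolding continuous_conv_def
proof (intro conjI allI impI ballI)
  let ?P = "pt II JJ A lim"
  show "g x \<in> ?P" if "x \<in> X" for x using g that by blast
  fix F x assume Fx: "cv F x"
  have F: "F \<in> filters (Pow X)" and x: "x \<in> X"
    using conv_space_filter[OF cv Fx] conv_space_point[OF cv Fx] .
  let ?G = "fimage X ?P g F"
  have "g ` X \<subseteq> ?P" using g by (auto simp: PiE_iff)
  then have G: "?G \<in> filters (Pow ?P)" using fimage_filter[OF _ F] by blast
  have "bullet II JJ A lim l \<in> Pow ?P" for l by (auto simp: bullet_def)
  then have "{l \<in> A. bullet II JJ A lim l \<in> ?G} = {l \<in> A. \<phi> l \<in> F}"
    using g\<phi> unfolding fimage_def by auto
  moreover define L where "L = lim {l \<in> A. \<phi> l \<in> F}"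
  moreover have "L \<in> A"
    unfolding L_def using conv_obj_lim[OF A conv_obj_preimage_filter[OF A conv_hom_C_hom[OF \<phi>] F]] .
  moreover have "x \<in> \<phi> L"
    unfolding L_def using conv_hom_lim[OF \<phi> F] Fx x by (auto simp: limP_def)
  ultimately have "g x \<in> bullet II JJ A lim (lim {l \<in> A. bullet II JJ A lim l \<in> ?G})"
    using g\<phi> x by auto
  then show "pt_conv II JJ A lim ?G (g x)" using G g x by (auto simp: pt_conv_def)
qed

theorem mainTheorem4:
  fixes II JJ :: "'i set set"
    and A :: "'a::order set" and lim :: "'a set \<Rightarrow> 'a"
    and X :: "'x set" and cv :: "'x set set \<Rightarrow> 'x \<Rightarrow> bool"
    and \<phi> :: "'a \<Rightarrow> 'x set"
  assumes "conv_space X cv"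
    and "conv_obj A lim"
    and "conv_hom II JJ A lim (Pow X) (limP X cv) \<phi>"
  shows "(\<exists>!g. g \<in> X \<rightarrow>\<^sub>E pt II JJ A lim
             \<and> (\<forall>l\<in>A. {x\<in>X. g x \<in> bullet II JJ A lim l} = \<phi> l))
       \<and> (\<forall>g. g \<in> X \<rightarrow>\<^sub>E pt II JJ A lim
             \<and> (\<forall>l\<in>A. {x\<in>X. g x \<in> bullet II JJ A lim l} = \<phi> l)
             \<longrightarrow> continuous_conv X cv (pt II JJ A lim) (pt_conv II JJ A lim) g)"
proof (intro conjI allI impI)
  show "\<exists>!g. g \<in> X \<rightarrow>\<^sub>E pt II JJ A lim
             \<and> (\<forall>l\<in>A. {x\<in>X. g x \<in> bullet II JJ A lim l} = \<phi> l)"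
  proof (rule ex1I[of _ "dagger X A \<phi>"], intro conjI ballI)
    show "dagger X A \<phi> \<in> X \<rightarrow>\<^sub>E pt II JJ A lim" by (rule dagger_funcset[OF assms])
    show "{x\<in>X. dagger X A \<phi> x \<in> bullet II JJ A lim l} = \<phi> l" if "l \<in> A" for l
      by (rule dagger_preimage_bullet[OF assms that])
  qed (elim conjE, rule eq_dagger_if_preimage_bullet)
qed (elim conjE, rule continuous_conv_if_preimage_bullet[OF assms])

end
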